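(* Let $a\le b$ be real numbers and let $u,v\in L^\infty(\mathbb{T})$ satisfy $a\le v(x)\le b$ a.e. and $\int_{\mathbb{T}}u(x)\,dx=I\in[a,b]$. Then there exists $w\in L^\infty(\mathbb{T})$ such that $a\le w(x)\le b$ a.e., $\int_{\mathbb{T}}w(x)\,dx=I$, and $$\|u-w\|_{L^1(\mathbb{T})}\le2\|u-v\|_{L^1(\mathbb{T})}.$$
   Context: $\mathbb{T}=\mathbb{R}/\mathbb{Z}$ with Lebesgue measure of total mass $1$. *)

theory Defs
  imports "HOL-Analysis.Analysis"
begin

text \<open>The circle T = R/Z with normalized Lebesgue measure, modelled by the
fundamental domain [0,1) with Lebesgue measure (total mass 1).
Functions on T are real functions considered on [0,1).\<close>

definition T_measure :: "real measure" where
  "T_measure = lebesgue_on {0..<1}"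

definition Linf :: "(real \<Rightarrow> real) set" where
  "Linf = {f. f \<in> borel_measurable T_measure \<and> (\<exists>C. AE x in T_measure. \<bar>f x\<bar> \<le> C)}"

end

theory Submission
  imports Defs "HOL-Probability.Probability_Measure"
begin

text \<open>Move \<open>v\<close> linearly towards the constant \<open>b\<close> (if the mean of \<open>v\<close> is at most \<open>I\<close>) or
  towards \<open>a\<close> (otherwise) until its mean is \<open>I\<close>. The result \<open>w\<close> stays in \<open>[a, b]\<close> and
  \<open>w - v\<close> has constant sign, so the \<open>L\<^sup>1\<close> distance from \<open>v\<close> to \<open>w\<close> is the difference of the
  means, \<open>|I - \<integral>v| = |\<integral>(u - v)|\<close>, which is at most \<open>\<parallel>u - v\<parallel>\<^sub>1\<close>. The triangle inequality
  through \<open>v\<close> gives the factor 2.\<close>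

interpretation T: prob_space T_measure
  unfolding T_measure_def by (rule prob_space_restrict_space) auto

lemma integrable_if_Linf: "f \<in> Linf \<Longrightarrow> integrable T_measure f"
  unfolding Linf_def using T.integrable_const_bound[of f] by auto

lemma Linf_if_AE_bounded:
  assumes "f \<in> borel_measurable T_measure" and "AE x in T_measure. a \<le> f x \<and> f x \<le> b"
  shows "f \<in> Linf"
proof -
  have "AE x in T_measure. \<bar>f x\<bar> \<le> \<bar>a\<bar> + \<bar>b\<bar>"
    using assms(2) by eventually_elim auto
  then show ?thesis
    using assms(1) unfolding Linf_def by auto
qed

lemma (in prob_space) raise_expectation_below_bound:
  fixes v :: "'a \<Rightarrow> real"
  assumes v: "integrable M v" and vb: "AE x in M. v x \<le> b"
    and "expectation v \<le> I" and "I \<le> b"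
  obtains w where "integrable M w" and "AE x in M. v x \<le> w x \<and> w x \<le> b"
    and "expectation w = I"
proof -
  define J where "J = expectation v"
  have "J \<le> b"
    unfolding J_def using v vb by (rule integral_le_const)
  define t where "t = (if J = b then 0 else (I - J) / (b - J))"
  have t: "0 \<le> t" "t \<le> 1" "t * (b - J) = I - J"
    using \<open>J \<le> b\<close> assms(3,4) by (auto simp: t_def J_def field_simps)
  define w where "w x = v x + t * (b - v x)" for x
  have "integrable M w"
    unfolding w_def using v by simp
  moreover have "AE x in M. v x \<le> w x \<and> w x \<le> b"
    using vb
  proof eventually_elim
    case (elim x)
    have "t * (b - v x) \<ge> 0" and "(1 - t) * (b - v x) \<ge> 0"
      using elim t by simp_all
    then show ?case
      using elim t unfolding w_def by (simp add: algebra_simps)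
  qed
  moreover have "expectation w = I"
    unfolding w_def using v prob_space t(3) by (simp add: J_def)
  ultimately show thesis ..
qed

lemma (in prob_space) adjust_expectation_within_bounds:
  fixes v :: "'a \<Rightarrow> real"
  assumes v: "integrable M v" and vab: "AE x in M. a \<le> v x \<and> v x \<le> b"
    and "a \<le> I" and "I \<le> b"
  obtains w where "integrable M w" and "AE x in M. a \<le> w x \<and> w x \<le> b"
    and "expectation w = I" and "(\<integral>x. \<bar>v x - w x\<bar> \<partial>M) = \<bar>I - expectation v\<bar>"
proof (cases "expectation v \<le> I")
  case True
  obtain w where w: "integrable M w" "AE x in M. v x \<le> w x \<and> w x \<le> b" "expectation w = I"
    using raise_expectation_below_bound[OF v _ True \<open>I \<le> b\<close>] vab by auto
  have "(\<integral>x. \<bar>v x - w x\<bar> \<partial>M) = (\<integral>x. w x - v x \<partial>M)"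
    using w(1,2) v by (intro integral_cong_AE) auto
  also have "\<dots> = I - expectation v"
    using w v by simp
  moreover have "AE x in M. a \<le> w x \<and> w x \<le> b"
    using vab w(2) by eventually_elim auto
  ultimately show thesis
    using that w(1,3) True by simp
next
  case False
  obtain w where w: "integrable M w" "AE x in M. - v x \<le> w x \<and> w x \<le> - a"
    "expectation w = - I"
    using raise_expectation_below_bound[of "\<lambda>x. - v x" "- a" "- I"] v vab False \<open>a \<le> I\<close>
    by (auto elim: AE_mp)
  have "(\<integral>x. \<bar>v x - - w x\<bar> \<partial>M) = (\<integral>x. v x + w x \<partial>M)"
    using w(1,2) v by (intro integral_cong_AE) auto
  also have "\<dots> = expectation v - I"
    using w v by simp
  moreover have "AE x in M. a \<le> - w x \<and> - w x \<le> b"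
    using vab w(2) by eventually_elim auto
  ultimately show thesis
    using that[of "\<lambda>x. - w x"] w(1,3) False by simp
qed

lemma integral_abs_diff_triangle:
  fixes u v w :: "'a \<Rightarrow> real"
  assumes "integrable M u" "integrable M v" "integrable M w"
  shows "(\<integral>x. \<bar>u x - w x\<bar> \<partial>M) \<le> (\<integral>x. \<bar>u x - v x\<bar> \<partial>M) + (\<integral>x. \<bar>v x - w x\<bar> \<partial>M)"
proof -
  have "(\<integral>x. \<bar>u x - w x\<bar> \<partial>M) \<le> (\<integral>x. \<bar>u x - v x\<bar> + \<bar>v x - w x\<bar> \<partial>M)"
    using assms by (intro integral_mono) auto
  also have "\<dots> = (\<integral>x. \<bar>u x - v x\<bar> \<partial>M) + (\<integral>x. \<bar>v x - w x\<bar> \<partial>M)"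
    using assms by (intro Bochner_Integration.integral_add) auto
  finally show ?thesis .
qed

lemma abs_integral_diff_le:
  fixes u v :: "'a \<Rightarrow> real"
  assumes "integrable M u" "integrable M v"
  shows "\<bar>(\<integral>x. u x \<partial>M) - (\<integral>x. v x \<partial>M)\<bar> \<le> (\<integral>x. \<bar>u x - v x\<bar> \<partial>M)"
  using integral_abs_bound[of M "\<lambda>x. u x - v x"] assms by simp

theorem lemma3:
  fixes a b I :: real and u v :: "real \<Rightarrow> real"
  assumes "a \<le> b"
    and "u \<in> Linf" and "v \<in> Linf"
    and "AE x in T_measure. a \<le> v x \<and> v x \<le> b"
    and "(\<integral>x. u x \<partial>T_measure) = I"
    and "a \<le> I" and "I \<le> b"
  shows "\<exists>w\<in>Linf. (AE x in T_measure. a \<le> w x \<and> w x \<le> b)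
           \<and> (\<integral>x. w x \<partial>T_measure) = I
           \<and> (\<integral>x. \<bar>u x - w x\<bar> \<partial>T_measure) \<le> 2 * (\<integral>x. \<bar>u x - v x\<bar> \<partial>T_measure)"
proof -
  have u: "integrable T_measure u" and v: "integrable T_measure v"
    using assms(2,3) by (auto intro: integrable_if_Linf)
  obtain w where w: "integrable T_measure w" "AE x in T_measure. a \<le> w x \<and> w x \<le> b"
    "(\<integral>x. w x \<partial>T_measure) = I"
    and vw: "(\<integral>x. \<bar>v x - w x\<bar> \<partial>T_measure) = \<bar>I - (\<integral>x. v x \<partial>T_measure)\<bar>"
    using T.adjust_expectation_within_bounds[OF v assms(4,6,7)] by blast
  have "w \<in> Linf"
    using w(1,2) by (auto intro: Linf_if_AE_bounded)
  moreover have "(\<integral>x. \<bar>u x - w x\<bar> \<partial>T_measure) \<le> 2 * (\<integral>x. \<bar>u x - v x\<bar> \<partial>T_measure)"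
    using integral_abs_diff_triangle[OF u v w(1)] abs_integral_diff_le[OF u v]
    unfolding vw assms(5) by linarith
  ultimately show ?thesis
    using w by blast
qed

end
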